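(* In the stochastic epidemic model described in the context (fixed population size $n$), for each $i,j\in[m]$ and $t\ge0$ let $\chi_{ij}=\chi_{ij}(t,\mathcal S,\mathcal I):=\mathbb{E}[1_{(a,b)}(t)\mid\mathcal S(t),\mathcal I(t)]=\Pr((a,b)\in E(t)\mid\mathcal S(t),\mathcal I(t))$ be the random variable giving the conditional probability that a pair of nodes $(a,b)\in\mathcal S_i(t)\times\mathcal I_j(t)$ is in contact at time $t$ given $(\mathcal S(t),\mathcal I(t))$. Then for all $t\ge0$ and $i\in[m]$ (with $'$ denoting the time derivative): (i) $\mathbb E[s_i]'=-\sum_{j=1}^m B_{ij}\mathbb E[n\chi_{ij}s_i\beta_j]$; (ii) $\mathbb E[\beta_i]'=\sum_{j=1}^m B_{ij}\mathbb E[n\chi_{ij}s_i\beta_j]-\gamma_i\mathbb E[\beta_i]$; (iii) $\mathbb E[s_i^2]'=-\sum_{j=1}^m\big(2B_{ij}\mathbb E[n\chi_{ij}s_i^2\beta_j]-B_{ij}\mathbb E[n\chi_{ij}s_i\beta_j]/n\big)$; (iv) $\mathbb E[\beta_i^2]'=\sum_{j=1}^m B_{ij}\big(2\mathbb E[n\chi_{ij}s_i\beta_j\beta_i]+\mathbb E[n\chi_{ij}s_i\beta_j]/n\big)-\gamma_i\big(2\mathbb E[\beta_i^2]-\mathbb E[\beta_i]/n\big)$.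
   Context: Stochastic epidemic model with population size $n$: node set $[n]$ partitioned into age groups $\mathcal A_1,\dots,\mathcal A_m$; parameters $B_{ij}\ge0$, $\rho_{ij}>0$ with $\rho_{ij}/n\le1$, $\gamma_i>0$, $\lambda>0$. A state consists of disease states $x_a\in\{0,1,-1\}$ (susceptible, infected, recovered), edge states $1_{(a,b)}\in\{0,1\}$ for ordered pairs of distinct nodes ($1$ = directed edge from $b$ to $a$), and auxiliary bits flipped at each update of a pair's edge state. With $\mathcal S_i(\mathbf x),\mathcal I_i(\mathbf x)$ the susceptible/infected nodes of $\mathcal A_i$ and $E_k^{(a)}(\mathbf x)=\sum_{c\in\mathcal I_k(\mathbf x)}1_{(a,c)}(\mathbf x)$, $\{\mathbf X(t)\}$ is a right-continuous time-homogeneous continuous-time Markov chain with only these transitions: susceptible $a\in\mathcal A_i$ becomes infected at rate $\sum_kB_{ik}E_k^{(a)}(\mathbf x)$; infected $a\in\mathcal A_i$ recovers at rate $\gamma_i$; the edge state of $(a,b)\in\mathcal A_i\times\mathcal A_j$ is updated to $1$ at rate $\lambda\rho_{ij}/n$ and to $0$ at rate $\lambda(1-\rho_{ij}/n)$ (auxiliary bit flipped each time). Notation: $\mathcal S_i(t)=\mathcal S_i(\mathbf X(t))$, $\mathcal I_i(t)=\mathcal I_i(\mathbf X(t))$, $\mathcal S(t)=\cup_i\mathcal S_i(t)$, $\mathcal I(t)=\cup_i\mathcal I_i(t)$, $E(t)$ the set of present edges, $1_{(a,b)}(t)=1_{(a,b)}(\mathbf X(t))$, $s_i=s_i(t)=|\mathcal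 S_i(t)|/n$, $\beta_i=\beta_i(t)=|\mathcal I_i(t)|/n$. The paper treats $\chi_{ij}$ as not depending on the particular pair $(a,b)\in\mathcal S_i(t)\times\mathcal I_j(t)$; when $\mathcal S_i(t)$ or $\mathcal I_j(t)$ is empty the products $s_i\beta_j$ vanish so the value of $\chi_{ij}$ there is immaterial. *)

theory Defs
  imports "HOL-Probability.Probability"
begin

text \<open>A state is a triple (d, e, u):
  d a : disease state of node a (0 susceptible, 1 infected, -1 recovered),
  e a b : edge state of the ordered pair (a,b) (True = directed edge from b to a),
  u a b : auxiliary bit of the pair (a,b), flipped at every update of its edge state.
  Nodes are 0,...,n-1; age groups are 0,...,m-1, node a belongs to group grp a.\<close>

type_synonym state = "(nat \<Rightarrow> int) \<times> (nat \<Rightarrow> nat \<Rightarrow> bool) \<times> (nat \<Rightarrow> nat \<Rightarrow> bool)"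

definition dis :: "state \<Rightarrow> nat \<Rightarrow> int" where "dis x = fst x"
definition edge :: "state \<Rightarrow> nat \<Rightarrow> nat \<Rightarrow> bool" where "edge x = fst (snd x)"
definition auxb :: "state \<Rightarrow> nat \<Rightarrow> nat \<Rightarrow> bool" where "auxb x = snd (snd x)"

definition states :: "nat \<Rightarrow> state set" where
  "states n = {x. (\<forall>a. dis x a \<in> {-1, 0, 1}) \<and> (\<forall>a. n \<le> a \<longrightarrow> dis x a = 0) \<and>
      (\<forall>a b. (edge x a b \<or> auxb x a b) \<longrightarrow> a < n \<and> b < n \<and> a \<noteq> b)}"

definition Sg :: "nat \<Rightarrow> (nat \<Rightarrow> nat) \<Rightarrow> nat \<Rightarrow> state \<Rightarrow> nat set" where
  "Sg n grp i x = {a. a < n \<and> grp a = i \<and> dis x a = 0}"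
definition Ig :: "nat \<Rightarrow> (nat \<Rightarrow> nat) \<Rightarrow> nat \<Rightarrow> state \<Rightarrow> nat set" where
  "Ig n grp i x = {a. a < n \<and> grp a = i \<and> dis x a = 1}"
definition Sall :: "nat \<Rightarrow> state \<Rightarrow> nat set" where
  "Sall n x = {a. a < n \<and> dis x a = 0}"
definition Iall :: "nat \<Rightarrow> state \<Rightarrow> nat set" where
  "Iall n x = {a. a < n \<and> dis x a = 1}"

definition Eind :: "nat \<Rightarrow> (nat \<Rightarrow> nat) \<Rightarrow> nat \<Rightarrow> nat \<Rightarrow> state \<Rightarrow> real" where
  "Eind n grp k a x = (\<Sum>c\<in>Ig n grp k x. if edge x a c then 1 else 0)"

definition sfrac :: "nat \<Rightarrow> (nat \<Rightarrow> nat) \<Rightarrow> nat \<Rightarrow> state \<Rightarrow> real" where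
  "sfrac n grp i x = real (card (Sg n grp i x)) / real n"
definition bfrac :: "nat \<Rightarrow> (nat \<Rightarrow> nat) \<Rightarrow> nat \<Rightarrow> state \<Rightarrow> real" where
  "bfrac n grp i x = real (card (Ig n grp i x)) / real n"

definition set_dis :: "state \<Rightarrow> nat \<Rightarrow> int \<Rightarrow> state" where
  "set_dis x a v = ((dis x)(a := v), edge x, auxb x)"
definition upd_edge :: "state \<Rightarrow> nat \<Rightarrow> nat \<Rightarrow> bool \<Rightarrow> state" where
  "upd_edge x a b v = (dis x, (edge x)(a := (edge x a)(b := v)),
                        (auxb x)(a := (auxb x a)(b := \<not> auxb x a b)))"

definition qrate :: "nat \<Rightarrow> nat \<Rightarrow> (nat \<Rightarrow> nat) \<Rightarrow> (nat \<Rightarrow> nat \<Rightarrow> real) \<Rightarrow> (nat \<Rightarrow> nat \<Rightarrow> real)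
     \<Rightarrow> (nat \<Rightarrow> real) \<Rightarrow> real \<Rightarrow> state \<Rightarrow> state \<Rightarrow> real" where
  "qrate n m grp B \<rho> \<gamma> lam x y =
     (\<Sum>a<n. if dis x a = 0 \<and> y = set_dis x a 1
              then (\<Sum>k<m. B (grp a) k * Eind n grp k a x) else 0)
   + (\<Sum>a<n. if dis x a = 1 \<and> y = set_dis x a (-1) then \<gamma> (grp a) else 0)
   + (\<Sum>a<n. \<Sum>b<n. if a \<noteq> b then
          (if y = upd_edge x a b True then lam * \<rho> (grp a) (grp b) / real n else 0)
        + (if y = upd_edge x a b False then lam * (1 - \<rho> (grp a) (grp b) / real n) else 0)
        else 0)"

definition totrate :: "nat \<Rightarrow> nat \<Rightarrow> (nat \<Rightarrow> nat) \<Rightarrow> (nat \<Rightarrow> nat \<Rightarrow> real) \<Rightarrow> (nat \<Rightarrow> nat \<Rightarrow> real)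
     \<Rightarrow> (nat \<Rightarrow> real) \<Rightarrow> real \<Rightarrow> state \<Rightarrow> real" where
  "totrate n m grp B \<rho> \<gamma> lam x =
     (\<Sum>a<n. if dis x a = 0 then (\<Sum>k<m. B (grp a) k * Eind n grp k a x) else 0)
   + (\<Sum>a<n. if dis x a = 1 then \<gamma> (grp a) else 0)
   + (\<Sum>a<n. \<Sum>b<n. if a \<noteq> b then
          lam * \<rho> (grp a) (grp b) / real n + lam * (1 - \<rho> (grp a) (grp b) / real n) else 0)"

definition generator :: "nat \<Rightarrow> nat \<Rightarrow> (nat \<Rightarrow> nat) \<Rightarrow> (nat \<Rightarrow> nat \<Rightarrow> real) \<Rightarrow> (nat \<Rightarrow> nat \<Rightarrow> real)
     \<Rightarrow> (nat \<Rightarrow> real) \<Rightarrow> real \<Rightarrow> state \<Rightarrow> state \<Rightarrow> real" where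
  "generator n m grp B \<rho> \<gamma> lam x y =
     (if x = y then - totrate n m grp B \<rho> \<gamma> lam x else qrate n m grp B \<rho> \<gamma> lam x y)"

definition ctmc :: "'w measure \<Rightarrow> (real \<Rightarrow> 'w \<Rightarrow> 's) \<Rightarrow> 's set \<Rightarrow> ('s \<Rightarrow> 's \<Rightarrow> real) \<Rightarrow> bool" where
  "ctmc M X S Q \<longleftrightarrow> prob_space M \<and> finite S \<and>
     (\<forall>t\<ge>0. X t \<in> measurable M (count_space UNIV)) \<and>
     (\<forall>t\<ge>0. \<forall>\<omega>\<in>space M. X t \<omega> \<in> S) \<and>
     (\<forall>\<omega>\<in>space M. \<forall>t\<ge>0. \<exists>\<delta>>0. \<forall>s. t \<le> s \<and> s < t + \<delta> \<longrightarrow> X s \<omega> = X t \<omega>) \<and>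
     (\<exists>P :: real \<Rightarrow> 's \<Rightarrow> 's \<Rightarrow> real.
        (\<forall>x\<in>S. \<forall>y\<in>S. ((\<lambda>h. (P h x y - (if x = y then 1 else 0)) / h) \<longlongrightarrow> Q x y) (at_right 0)) \<and>
        (\<forall>(k::nat) (s::nat \<Rightarrow> real) (z::nat \<Rightarrow> 's) t h x y.
            0 \<le> t \<and> 0 \<le> h \<and> (\<forall>i<k. 0 \<le> s i \<and> s i \<le> t) \<longrightarrow>
            measure M {\<omega>\<in>space M. X (t + h) \<omega> = y \<and> X t \<omega> = x \<and> (\<forall>i<k. X (s i) \<omega> = z i)}
              = P h x y * measure M {\<omega>\<in>space M. X t \<omega> = x \<and> (\<forall>i<k. X (s i) \<omega> = z i)}))"

definition cond_edge :: "'w measure \<Rightarrow> (real \<Rightarrow> 'w \<Rightarrow> state) \<Rightarrow> nat \<Rightarrow> real \<Rightarrow> nat \<Rightarrow> nat \<Rightarrow> 'w \<Rightarrow> real" where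
  "cond_edge M X n t a b \<omega> =
     measure M {\<omega>'\<in>space M. edge (X t \<omega>') a b \<and>
        Sall n (X t \<omega>') = Sall n (X t \<omega>) \<and> Iall n (X t \<omega>') = Iall n (X t \<omega>)}
   / measure M {\<omega>'\<in>space M. Sall n (X t \<omega>') = Sall n (X t \<omega>) \<and> Iall n (X t \<omega>') = Iall n (X t \<omega>)}"

end

theory Submission
  imports Defs
begin

text \<open>Kolmogorov's forward equation gives \<open>d/dt E[f(X t)] = E[(Q f)(X t)]\<close> for the finite-state chain.
  For \<open>f = \<psi>(s\<^sub>i, \<beta>\<^sub>i)\<close>, edge updates leave \<open>f\<close> unchanged, so \<open>Q f\<close> only sees the
  infection of a susceptible node of group \<open>i\<close> (rate \<open>\<Sum>\<^sub>k B\<^sub>i\<^sub>k E\<^sub>k\<^sup>a\<close>, which moves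
  \<open>(s\<^sub>i, \<beta>\<^sub>i)\<close> by \<open>(-1/n, 1/n)\<close>) and the recovery of an infected node of group \<open>i\<close> (rate
  \<open>\<gamma>\<^sub>i\<close>, moving \<open>\<beta>\<^sub>i\<close> by \<open>-1/n\<close>). Summed over the susceptible nodes of group \<open>i\<close>, the
  infection rates count the edges between \<open>S\<^sub>i\<close> and \<open>I\<^sub>k\<close>. The increment of \<open>\<psi>\<close> depends on
  the state only through \<open>(S, I)\<close>, so by the tower property that count may be replaced by its
  conditional expectation given \<open>(S(t), I(t))\<close>, which is \<open>n\<^sup>2 \<chi>\<^sub>i\<^sub>k s\<^sub>i \<beta>\<^sub>k\<close>. The four
  identities are the cases \<open>\<psi> = s, \<beta>, s\<^sup>2, \<beta>\<^sup>2\<close>.\<close>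

lemma sets_Collect_comp_count_space:
  assumes "W \<in> measurable M (count_space UNIV)"
  shows "{\<omega> \<in> space M. P (W \<omega>)} \<in> sets M"
  using measurable_sets[OF assms, of "{x. P x}"] by (simp add: vimage_def Int_def conj_commute)

lemma (in finite_measure) has_bochner_integral_finite_range:
  fixes F :: "'v \<Rightarrow> real"
  assumes V: "finite V" and W: "W \<in> measurable M (count_space UNIV)"
    and WV: "\<And>\<omega>. \<omega> \<in> space M \<Longrightarrow> W \<omega> \<in> V"
  shows "has_bochner_integral M (\<lambda>\<omega>. F (W \<omega>)) (\<Sum>v\<in>V. F v * measure M {\<omega> \<in> space M. W \<omega> = v})"
proof -
  have fibre: "{\<omega> \<in> space M. W \<omega> = v} \<in> sets M" for v
    using sets_Collect_comp_count_space[OF W] .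
  have rep: "F (W \<omega>) = (\<Sum>v\<in>V. F v * indicator {\<omega> \<in> space M. W \<omega> = v} \<omega>)" if "\<omega> \<in> space M" for \<omega>
    using that WV[OF that] V by (simp add: indicator_def if_distrib sum.If_cases Int_absorb1 cong: if_cong)
  have "has_bochner_integral M (\<lambda>\<omega>. \<Sum>v\<in>V. F v * indicator {\<omega> \<in> space M. W \<omega> = v} \<omega>)
      (\<Sum>v\<in>V. F v * measure M {\<omega> \<in> space M. W \<omega> = v})"
    by (intro has_bochner_integral_sum has_bochner_integral_mult_right has_bochner_integral_real_indicator)
       (simp_all add: fibre less_top[symmetric])
  then show ?thesis
    by (subst has_bochner_integral_cong[OF refl rep refl])
qed

lemma (in finite_measure) integral_finite_range:
  fixes F :: "'v \<Rightarrow> real"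
  assumes "finite V" "W \<in> measurable M (count_space UNIV)" "\<And>\<omega>. \<omega> \<in> space M \<Longrightarrow> W \<omega> \<in> V"
  shows "(LINT \<omega>|M. F (W \<omega>)) = (\<Sum>v\<in>V. F v * measure M {\<omega> \<in> space M. W \<omega> = v})"
  by (rule has_bochner_integral_integral_eq[OF has_bochner_integral_finite_range]) (use assms in auto)

lemma (in finite_measure) measure_finite_range:
  assumes "finite V" "W \<in> measurable M (count_space UNIV)" "\<And>\<omega>. \<omega> \<in> space M \<Longrightarrow> W \<omega> \<in> V"
  shows "measure M {\<omega> \<in> space M. P (W \<omega>)} = (\<Sum>v\<in>V. of_bool (P v) * measure M {\<omega> \<in> space M. W \<omega> = v})"
proof -
  have "measure M {\<omega> \<in> space M. P (W \<omega>)} = (LINT \<omega>|M. indicator {\<omega> \<in> space M. P (W \<omega>)} \<omega>)"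
    using sets_Collect_comp_count_space[OF assms(2)] by simp
  also have "\<dots> = (LINT \<omega>|M. of_bool (P (W \<omega>)))"
    by (rule Bochner_Integration.integral_cong) (simp_all add: indicator_def)
  also have "\<dots> = (\<Sum>v\<in>V. of_bool (P v) * measure M {\<omega> \<in> space M. W \<omega> = v})"
    by (rule integral_finite_range[OF assms])
  finally show ?thesis .
qed

lemma sum_tower_fibres:
  fixes G p :: "'s \<Rightarrow> real"
  assumes S: "finite S" and p: "\<And>x. 0 \<le> p x" and G: "\<And>x y. W x = W y \<Longrightarrow> G x = G y"
  shows "(\<Sum>x\<in>S. G x * ((\<Sum>y\<in>{y \<in> S. W y = W x}. of_bool (E y) * p y) / (\<Sum>y\<in>{y \<in> S. W y = W x}. p y)) * p x)
    = (\<Sum>x\<in>S. G x * of_bool (E x) * p x)"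
proof -
  define fibre where "fibre z = {x \<in> S. W x = z}" for z
  define num where "num z = (\<Sum>x\<in>fibre z. of_bool (E x) * p x)" for z
  define den where "den z = (\<Sum>x\<in>fibre z. p x)" for z
  have fibre_sum: "(\<Sum>x\<in>fibre z. G x * (num z / den z) * p x) = (\<Sum>x\<in>fibre z. G x * of_bool (E x) * p x)"
    if z: "z \<in> W ` S" for z
  proof -
    obtain x0 where "x0 \<in> fibre z"
      using z by (auto simp: fibre_def)
    then have G_fibre: "G x = G x0" if "x \<in> fibre z" for x
      using that G by (auto simp: fibre_def)
    have "num z \<le> den z" "0 \<le> num z"
      unfolding num_def den_def by (auto intro!: sum_mono sum_nonneg simp: p)
    then have cancel: "num z / den z * den z = num z"
      by (cases "den z = 0") auto
    have "(\<Sum>x\<in>fibre z. G x * (num z / den z) * p x) = G x0 * (num z / den z) * den z"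
      by (simp add: G_fibre den_def sum_distrib_left)
    also have "\<dots> = G x0 * num z"
      by (simp only: mult.assoc cancel)
    also have "\<dots> = (\<Sum>x\<in>fibre z. G x * of_bool (E x) * p x)"
      by (simp add: G_fibre num_def sum_distrib_left mult.assoc)
    finally show ?thesis .
  qed
  have "(\<Sum>x\<in>S. G x * (num (W x) / den (W x)) * p x) = (\<Sum>z\<in>W ` S. \<Sum>x\<in>fibre z. G x * (num z / den z) * p x)"
    unfolding fibre_def by (subst sum.image_gen[OF S]) (auto intro!: sum.cong)
  also have "\<dots> = (\<Sum>z\<in>W ` S. \<Sum>x\<in>fibre z. G x * of_bool (E x) * p x)"
    by (rule sum.cong[OF refl fibre_sum])
  also have "\<dots> = (\<Sum>x\<in>S. G x * of_bool (E x) * p x)"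
    unfolding fibre_def by (rule sum.image_gen[OF S, symmetric])
  finally show ?thesis
    by (simp add: num_def den_def fibre_def)
qed

text \<open>The tower property. Fibres of \<open>W\<close> of probability zero do no harm: there the numerator of the
  conditional probability vanishes too.\<close>
lemma (in finite_measure) integral_mult_cond_prob:
  fixes G :: "'s \<Rightarrow> real"
  assumes S: "finite S" and Y: "Y \<in> measurable M (count_space UNIV)"
    and YS: "\<And>\<omega>. \<omega> \<in> space M \<Longrightarrow> Y \<omega> \<in> S"
    and G: "\<And>x y. W x = W y \<Longrightarrow> G x = G y"
  shows "(LINT \<omega>|M. G (Y \<omega>) * \<P>(\<omega>' in M. E (Y \<omega>') \<bar> W (Y \<omega>') = W (Y \<omega>)))
       = (LINT \<omega>|M. G (Y \<omega>) * of_bool (E (Y \<omega>)))"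
proof -
  define p where "p x = measure M {\<omega> \<in> space M. Y \<omega> = x}" for x
  have sum_fibre: "(\<Sum>y\<in>{y \<in> S. W y = z}. f y) = (\<Sum>y\<in>S. of_bool (W y = z) * f y)"
    for z and f :: "'s \<Rightarrow> real"
    by (auto simp: sum.inter_filter[OF S] intro!: sum.cong)
  have "\<P>(\<omega>' in M. E (Y \<omega>') \<bar> W (Y \<omega>') = z)
      = (\<Sum>y\<in>{y \<in> S. W y = z}. of_bool (E y) * p y) / (\<Sum>y\<in>{y \<in> S. W y = z}. p y)" for z
    using measure_finite_range[OF S Y YS, of "\<lambda>x. E x \<and> W x = z"]
      measure_finite_range[OF S Y YS, of "\<lambda>x. W x = z"]
    by (simp add: cond_prob_def sum_fibre p_def of_bool_conj mult_ac)
  moreover have "(\<Sum>x\<in>S. G x * ((\<Sum>y\<in>{y \<in> S. W y = W x}. of_bool (E y) * p y) / (\<Sum>y\<in>{y \<in> S. W y = W x}. p y)) * p x)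
      = (\<Sum>x\<in>S. G x * of_bool (E x) * p x)"
    by (rule sum_tower_fibres[OF S _ G]) (simp add: p_def)
  ultimately show ?thesis
    using integral_finite_range[OF S Y YS, of "\<lambda>x. G x * \<P>(\<omega>' in M. E (Y \<omega>') \<bar> W (Y \<omega>') = W x)"]
      integral_finite_range[OF S Y YS, of "\<lambda>x. G x * of_bool (E x)"]
    by (simp add: p_def)
qed

lemma filterlim_lag_at_right:
  fixes a t :: real
  shows "filterlim (\<lambda>s. t - s) (at_right 0) (at t within {a..<t})"
proof -
  have "((\<lambda>s. t - s) \<longlongrightarrow> 0) (at t within {a..<t})"
    using tendsto_diff[OF tendsto_const[of t] tendsto_ident_at[of t "{a..<t}"]] by simp
  then show ?thesis
    unfolding filterlim_at by (auto simp: eventually_at_filter)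
qed

text \<open>A chain in the sense of \<^const>\<open>ctmc\<close> with its transition function \<open>P\<close> made explicit; of
  the Markov property only the case without earlier observation times is needed.\<close>
locale ctmc_transitions = prob_space M for M :: "'w measure" +
  fixes X :: "real \<Rightarrow> 'w \<Rightarrow> 's" and S :: "'s set"
    and Q :: "'s \<Rightarrow> 's \<Rightarrow> real" and P :: "real \<Rightarrow> 's \<Rightarrow> 's \<Rightarrow> real"
  assumes finite_states: "finite S"
    and measurable_X: "\<And>t. 0 \<le> t \<Longrightarrow> X t \<in> measurable M (count_space UNIV)"
    and X_in_states: "\<And>t \<omega>. 0 \<le> t \<Longrightarrow> \<omega> \<in> space M \<Longrightarrow> X t \<omega> \<in> S"
    and transition_rate: "\<And>x y. x \<in> S \<Longrightarrow> y \<in> S \<Longrightarrow>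
      ((\<lambda>h. (P h x y - of_bool (x = y)) / h) \<longlongrightarrow> Q x y) (at_right 0)"
    and transition_prob: "\<And>t h x y. 0 \<le> t \<Longrightarrow> 0 \<le> h \<Longrightarrow>
      prob {\<omega> \<in> space M. X (t + h) \<omega> = y \<and> X t \<omega> = x} = P h x y * prob {\<omega> \<in> space M. X t \<omega> = x}"
begin

definition marginal :: "real \<Rightarrow> 's \<Rightarrow> real" where
  "marginal t x = prob {\<omega> \<in> space M. X t \<omega> = x}"

lemma integral_state_fun:
  fixes f :: "'s \<Rightarrow> real"
  assumes "0 \<le> t"
  shows "(LINT \<omega>|M. f (X t \<omega>)) = (\<Sum>x\<in>S. f x * marginal t x)"
  unfolding marginal_def
  using integral_finite_range[OF finite_states measurable_X[OF assms] X_in_states[OF assms]] .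

lemma marginal_shift:
  assumes "0 \<le> s" "0 \<le> h"
  shows "marginal (s + h) y = (\<Sum>x\<in>S. P h x y * marginal s x)"
proof -
  have events: "{\<omega> \<in> space M. X \<tau> \<omega> = x} \<in> events" if "0 \<le> \<tau>" for \<tau> x
    using sets_Collect_comp_count_space[OF measurable_X[OF that]] .
  have "{\<omega> \<in> space M. X (s + h) \<omega> = y} = (\<Union>x\<in>S. {\<omega> \<in> space M. X (s + h) \<omega> = y \<and> X s \<omega> = x})"
    using X_in_states[OF assms(1)] by auto
  then have "marginal (s + h) y = (\<Sum>x\<in>S. prob {\<omega> \<in> space M. X (s + h) \<omega> = y \<and> X s \<omega> = x})"
    unfolding marginal_def
    by (simp only:, intro finite_measure_finite_Union finite_states)
       (auto simp: disjoint_family_on_def intro!: sets.sets_Collect_conj events assms add_nonneg_nonneg)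
  also have "\<dots> = (\<Sum>x\<in>S. P h x y * marginal s x)"
    using transition_prob[OF assms] by (simp add: marginal_def)
  finally show ?thesis .
qed

lemma transition_tendsto:
  assumes "x \<in> S" "y \<in> S"
  shows "((\<lambda>h. P h x y) \<longlongrightarrow> of_bool (x = y)) (at_right 0)"
proof -
  have "((\<lambda>h. (P h x y - of_bool (x = y)) / h * h) \<longlongrightarrow> Q x y * 0) (at_right 0)"
    by (intro tendsto_mult transition_rate assms tendsto_ident_at)
  moreover have "\<forall>\<^sub>F h in at_right 0. (P h x y - of_bool (x = y)) / h * h = P h x y - of_bool (x = y)"
    by (simp add: eventually_at_filter)
  ultimately have "((\<lambda>h. P h x y - of_bool (x = y)) \<longlongrightarrow> 0) (at_right 0)"
    by (simp add: Lim_transform_eventually)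
  then show ?thesis
    by (rule LIM_zero_cancel)
qed

lemma marginal_increment_bound:
  assumes "0 \<le> s" "0 \<le> h" "y \<in> S"
  shows "\<bar>marginal (s + h) y - marginal s y\<bar> \<le> (\<Sum>x\<in>S. \<bar>P h x y - of_bool (x = y)\<bar>)"
proof -
  have "marginal s y = (\<Sum>x\<in>S. of_bool (x = y) * marginal s x)"
    using assms(3) finite_states by simp
  then have "\<bar>marginal (s + h) y - marginal s y\<bar> = \<bar>\<Sum>x\<in>S. (P h x y - of_bool (x = y)) * marginal s x\<bar>"
    by (simp add: marginal_shift assms sum_subtractf left_diff_distrib)
  also have "\<dots> \<le> (\<Sum>x\<in>S. \<bar>P h x y - of_bool (x = y)\<bar> * marginal s x)"
    by (rule order_trans[OF sum_abs]) (simp add: abs_mult marginal_def)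
  also have "\<dots> \<le> (\<Sum>x\<in>S. \<bar>P h x y - of_bool (x = y)\<bar>)"
    by (intro sum_mono mult_left_le) (simp_all add: marginal_def)
  finally show ?thesis .
qed

lemma marginal_left_continuous:
  assumes "0 \<le> t" "x \<in> S"
  shows "((\<lambda>s. marginal s x) \<longlongrightarrow> marginal t x) (at t within {0..<t})"
proof -
  have "((\<lambda>s. \<Sum>z\<in>S. \<bar>P (t - s) z x - of_bool (z = x)\<bar>) \<longlongrightarrow> (\<Sum>z\<in>S. \<bar>of_bool (z = x) - of_bool (z = x)\<bar>))
      (at t within {0..<t})"
    by (intro tendsto_sum tendsto_rabs tendsto_diff filterlim_compose[OF transition_tendsto filterlim_lag_at_right]
        tendsto_const assms)
  then have bound: "((\<lambda>s. \<Sum>z\<in>S. \<bar>P (t - s) z x - of_bool (z = x)\<bar>) \<longlongrightarrow> 0) (at t within {0..<t})"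
    by simp
  have "norm (marginal s x - marginal t x) \<le> (\<Sum>z\<in>S. \<bar>P (t - s) z x - of_bool (z = x)\<bar>)"
    if "s \<in> {0..<t}" for s
    using marginal_increment_bound[of s "t - s" x] that assms by (simp add: abs_minus_commute)
  then have "\<forall>\<^sub>F s in at t within {0..<t}. norm (marginal s x - marginal t x)
      \<le> (\<Sum>z\<in>S. \<bar>P (t - s) z x - of_bool (z = x)\<bar>)"
    by (auto simp: eventually_at_filter)
  then have "((\<lambda>s. marginal s x - marginal t x) \<longlongrightarrow> 0) (at t within {0..<t})"
    by (rule Lim_null_comparison[OF _ bound])
  then show ?thesis
    by (rule LIM_zero_cancel)
qed

lemma expectation_increment:
  fixes f :: "'s \<Rightarrow> real"
  assumes "0 \<le> s" "0 \<le> h"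
  shows "(LINT \<omega>|M. f (X (s + h) \<omega>)) - (LINT \<omega>|M. f (X s \<omega>))
    = (\<Sum>z\<in>S. marginal s z * (\<Sum>x\<in>S. (P h z x - of_bool (z = x)) * f x))"
proof -
  have "(LINT \<omega>|M. f (X (s + h) \<omega>)) = (\<Sum>x\<in>S. \<Sum>z\<in>S. marginal s z * P h z x * f x)"
    using assms by (simp add: integral_state_fun marginal_shift sum_distrib_left sum_distrib_right mult_ac)
  also have "\<dots> = (\<Sum>z\<in>S. marginal s z * (\<Sum>x\<in>S. P h z x * f x))"
    by (subst sum.swap) (simp add: sum_distrib_left mult.assoc)
  finally have new: "(LINT \<omega>|M. f (X (s + h) \<omega>)) = \<dots>" .
  have "(LINT \<omega>|M. f (X s \<omega>)) = (\<Sum>z\<in>S. marginal s z * (\<Sum>x\<in>S. of_bool (z = x) * f x))"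
    using assms finite_states by (auto simp: integral_state_fun mult.commute intro!: sum.cong)
  with new show ?thesis
    by (simp add: sum_subtractf right_diff_distrib left_diff_distrib)
qed

definition rate_quotient :: "real \<Rightarrow> ('s \<Rightarrow> real) \<Rightarrow> 's \<Rightarrow> real" where
  "rate_quotient h f z = (\<Sum>x\<in>S. (P h z x - of_bool (z = x)) / h * f x)"

lemma expectation_difference_quotient:
  fixes f :: "'s \<Rightarrow> real"
  assumes "0 \<le> s" "0 < h"
  shows "((LINT \<omega>|M. f (X (s + h) \<omega>)) - (LINT \<omega>|M. f (X s \<omega>))) / h
    = (\<Sum>z\<in>S. marginal s z * rate_quotient h f z)"
  unfolding expectation_increment[OF assms(1) less_imp_le[OF assms(2)]] rate_quotient_def
  by (simp only: sum_divide_distrib sum_distrib_left times_divide_eq_left times_divide_eq_right)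

lemma rate_quotient_tendsto:
  assumes "z \<in> S"
  shows "((\<lambda>h. rate_quotient h f z) \<longlongrightarrow> (\<Sum>y\<in>S. Q z y * f y)) (at_right 0)"
  unfolding rate_quotient_def using assms by (intro tendsto_sum tendsto_mult_right transition_rate)

text \<open>Kolmogorov's forward equation, tested against \<open>f\<close>. The difference quotients from the left
  are weighted by the marginals at the earlier time, hence the need for left continuity.\<close>
lemma expectation_has_derivative:
  fixes f :: "'s \<Rightarrow> real"
  assumes t: "0 \<le> t"
  shows "((\<lambda>\<tau>. LINT \<omega>|M. f (X \<tau> \<omega>)) has_real_derivative (LINT \<omega>|M. (\<Sum>y\<in>S. Q (X t \<omega>) y * f y)))
    (at t within {0..})"
proof -
  define G where "G \<tau> = (LINT \<omega>|M. f (X \<tau> \<omega>))" for \<tau>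
  define D where "D = (\<Sum>z\<in>S. marginal t z * (\<Sum>y\<in>S. Q z y * f y))"
  have "((\<lambda>h. \<Sum>z\<in>S. marginal t z * rate_quotient h f z) \<longlongrightarrow> D) (at_right 0)"
    unfolding D_def by (intro tendsto_sum tendsto_mult_left rate_quotient_tendsto)
  moreover have "(\<Sum>z\<in>S. marginal t z * rate_quotient h f z) = (G (h + t) - G t) / (h + t - t)"
    if "0 < h" for h
    using expectation_difference_quotient[OF t that, of f] by (simp add: G_def add.commute)
  then have "\<forall>\<^sub>F h in at_right 0. (\<Sum>z\<in>S. marginal t z * rate_quotient h f z) = (G (h + t) - G t) / (h + t - t)"
    by (auto simp: eventually_at_filter)
  ultimately have "((\<lambda>h. (G (h + t) - G t) / (h + t - t)) \<longlongrightarrow> D) (at_right 0)"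
    by (rule Lim_transform_eventually)
  then have right: "((\<lambda>y. (G y - G t) / (y - t)) \<longlongrightarrow> D) (at t within {t..})"
    unfolding at_within_Ici_at_right by (subst filterlim_at_right_to_0)
  have "((\<lambda>s. \<Sum>z\<in>S. marginal s z * rate_quotient (t - s) f z) \<longlongrightarrow> D) (at t within {0..<t})"
    unfolding D_def
    by (intro tendsto_sum tendsto_mult marginal_left_continuous
        filterlim_compose[OF rate_quotient_tendsto filterlim_lag_at_right] t)
  moreover have "(\<Sum>z\<in>S. marginal s z * rate_quotient (t - s) f z) = (G s - G t) / (s - t)"
    if "s \<in> {0..<t}" for s
  proof -
    have "(G s - G t) / (s - t) = (G t - G s) / (t - s)"
      using minus_divide_divide[of "G t - G s" "t - s"] by simp
    then show ?thesis
      using expectation_difference_quotient[of s "t - s" f] that by (simp add: G_def)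
  qed
  then have "\<forall>\<^sub>F s in at t within {0..<t}. (\<Sum>z\<in>S. marginal s z * rate_quotient (t - s) f z) = (G s - G t) / (s - t)"
    by (auto simp: eventually_at_filter)
  ultimately have left: "((\<lambda>y. (G y - G t) / (y - t)) \<longlongrightarrow> D) (at t within {0..<t})"
    by (rule Lim_transform_eventually)
  have "{0..} = {0..<t} \<union> {t..}"
    using t by auto
  then have "((\<lambda>y. (G y - G t) / (y - t)) \<longlongrightarrow> D) (at t within {0..})"
    using left right by (simp add: Lim_within_Un)
  moreover have "(LINT \<omega>|M. (\<Sum>y\<in>S. Q (X t \<omega>) y * f y)) = D"
    unfolding integral_state_fun[OF t, of "\<lambda>x. \<Sum>y\<in>S. Q x y * f y"] D_def by (simp add: mult.commute)
  ultimately show ?thesis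
    unfolding has_field_derivative_iff G_def by simp
qed

end

lemma ctmc_transitionsE:
  fixes X :: "real \<Rightarrow> 'w \<Rightarrow> 's"
  assumes "ctmc M X S Q"
  obtains P where "ctmc_transitions M X S Q P"
proof -
  obtain P :: "real \<Rightarrow> 's \<Rightarrow> 's \<Rightarrow> real" where
    rate: "\<forall>x\<in>S. \<forall>y\<in>S. ((\<lambda>h. (P h x y - (if x = y then 1 else 0)) / h) \<longlongrightarrow> Q x y) (at_right 0)" and
    markov: "\<forall>(k::nat) (s::nat \<Rightarrow> real) (z::nat \<Rightarrow> 's) t h x y.
            0 \<le> t \<and> 0 \<le> h \<and> (\<forall>i<k. 0 \<le> s i \<and> s i \<le> t) \<longrightarrow>
            measure M {\<omega>\<in>space M. X (t + h) \<omega> = y \<and> X t \<omega> = x \<and> (\<forall>i<k. X (s i) \<omega> = z i)}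
              = P h x y * measure M {\<omega>\<in>space M. X t \<omega> = x \<and> (\<forall>i<k. X (s i) \<omega> = z i)}"
    using assms unfolding ctmc_def by blast
  have "prob_space M" "finite S" "\<forall>t\<ge>0. X t \<in> measurable M (count_space UNIV)"
    "\<forall>t\<ge>0. \<forall>\<omega>\<in>space M. X t \<omega> \<in> S"
    using assms unfolding ctmc_def by blast+
  then have "ctmc_transitions M X S Q P"
    using rate spec[OF markov, of 0]
    by (simp add: ctmc_transitions_def ctmc_transitions_axioms_def of_bool_def)
  then show ?thesis ..
qed

lemma ctmc_expectation_has_derivative:
  fixes f :: "'s \<Rightarrow> real"
  assumes "ctmc M X S Q" "0 \<le> t"
  shows "((\<lambda>\<tau>. LINT \<omega>|M. f (X \<tau> \<omega>)) has_real_derivative (LINT \<omega>|M. (\<Sum>y\<in>S. Q (X t \<omega>) y * f y)))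
    (at t within {0..})"
proof -
  obtain P where "ctmc_transitions M X S Q P"
    using assms(1) by (rule ctmc_transitionsE)
  then show ?thesis
    using assms(2) by (rule ctmc_transitions.expectation_has_derivative)
qed

lemma set_dis_projections [simp]:
  "dis (set_dis x a v) = (dis x)(a := v)" "edge (set_dis x a v) = edge x" "auxb (set_dis x a v) = auxb x"
  by (simp_all add: set_dis_def dis_def edge_def auxb_def)

lemma set_dis_in_states:
  assumes "x \<in> states n" "a < n" "v \<in> {-1, 0, 1}" "dis x a \<noteq> v"
  shows "set_dis x a v \<in> states n - {x}"
proof -
  have "set_dis x a v \<noteq> x"
    using assms(4) by (metis fun_upd_same set_dis_projections(1))
  moreover have "set_dis x a v \<in> states n"
    using assms(1-3) by (auto simp: states_def)
  ultimately show ?thesis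
    by simp
qed

text \<open>The auxiliary bit is what makes every edge update an actual jump, even when the
  edge state itself does not change.\<close>
lemma upd_edge_in_states:
  assumes "x \<in> states n" "a < n" "b < n" "a \<noteq> b"
  shows "upd_edge x a b v \<in> states n - {x}"
proof -
  have "auxb (upd_edge x a b v) a b \<noteq> auxb x a b"
    by (simp add: upd_edge_def auxb_def)
  then have "upd_edge x a b v \<noteq> x"
    by metis
  moreover have "upd_edge x a b v \<in> states n"
    using assms by (auto simp: states_def upd_edge_def edge_def auxb_def dis_def)
  ultimately show ?thesis
    by simp
qed

lemma sum_if_eq_mult:
  fixes f :: "'a \<Rightarrow> 'b::semiring_0"
  assumes "finite A" "P \<Longrightarrow> T \<in> A"
  shows "(\<Sum>y\<in>A. (if P \<and> y = T then c else 0) * f y) = (if P then c * f T else 0)"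
proof (cases P)
  case True
  then have "(\<Sum>y\<in>A. (if P \<and> y = T then c else 0) * f y) = (\<Sum>y\<in>A. if y = T then c * f y else 0)"
    by (intro sum.cong) auto
  with assms True show ?thesis
    by simp
qed simp

lemma sum_if_add:
  fixes u v :: "'a \<Rightarrow> 'b::comm_monoid_add"
  shows "(\<Sum>a\<in>A. if P a then u a + v a else 0) = (\<Sum>a\<in>A. if P a then u a else 0) + (\<Sum>a\<in>A. if P a then v a else 0)"
  unfolding sum.distrib[symmetric] by (rule sum.cong) auto

lemma sum_if_diff:
  fixes u v :: "'a \<Rightarrow> 'b::ab_group_add"
  shows "(\<Sum>a\<in>A. if P a then u a - v a else 0) = (\<Sum>a\<in>A. if P a then u a else 0) - (\<Sum>a\<in>A. if P a then v a else 0)"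
  unfolding sum_subtractf[symmetric] by (rule sum.cong) auto

lemma sum_qrate:
  fixes f :: "state \<Rightarrow> real"
  assumes fin: "finite (states n)" and x: "x \<in> states n"
  shows "(\<Sum>y\<in>states n - {x}. qrate n m grp B \<rho> \<gamma> lam x y * f y) =
     (\<Sum>a<n. if dis x a = 0 then (\<Sum>k<m. B (grp a) k * Eind n grp k a x) * f (set_dis x a 1) else 0)
   + (\<Sum>a<n. if dis x a = 1 then \<gamma> (grp a) * f (set_dis x a (-1)) else 0)
   + (\<Sum>a<n. \<Sum>b<n. if a \<noteq> b then lam * \<rho> (grp a) (grp b) / real n * f (upd_edge x a b True)
        + lam * (1 - \<rho> (grp a) (grp b) / real n) * f (upd_edge x a b False) else 0)"
proof -
  define S where "S = states n - {x}"
  have finS: "finite S"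
    using fin by (simp add: S_def)
  define r where "r a = (\<Sum>k<m. B (grp a) k * Eind n grp k a x)" for a
  define c1 where "c1 a b = lam * \<rho> (grp a) (grp b) / real n" for a b
  define c0 where "c0 a b = lam * (1 - \<rho> (grp a) (grp b) / real n)" for a b
  have infection: "(\<Sum>y\<in>S. (\<Sum>a<n. if dis x a = 0 \<and> y = set_dis x a 1 then r a else 0) * f y)
      = (\<Sum>a<n. if dis x a = 0 then r a * f (set_dis x a 1) else 0)"
    unfolding sum_distrib_right
    by (subst sum.swap, intro sum.cong refl sum_if_eq_mult finS)
       (use x set_dis_in_states[OF x] in \<open>auto simp: S_def\<close>)
  have recovery: "(\<Sum>y\<in>S. (\<Sum>a<n. if dis x a = 1 \<and> y = set_dis x a (-1) then \<gamma> (grp a) else 0) * f y)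
      = (\<Sum>a<n. if dis x a = 1 then \<gamma> (grp a) * f (set_dis x a (-1)) else 0)"
    unfolding sum_distrib_right
    by (subst sum.swap, intro sum.cong refl sum_if_eq_mult finS)
       (use x set_dis_in_states[OF x] in \<open>auto simp: S_def\<close>)
  have edge_pair: "(\<Sum>y\<in>S. (if a \<noteq> b then (if y = upd_edge x a b True then c1 a b else 0)
        + (if y = upd_edge x a b False then c0 a b else 0) else 0) * f y)
      = (if a \<noteq> b then c1 a b * f (upd_edge x a b True) + c0 a b * f (upd_edge x a b False) else 0)"
    if "a < n" "b < n" for a b
  proof -
    have "(\<Sum>y\<in>S. (if a \<noteq> b then (if y = upd_edge x a b True then c1 a b else 0)
        + (if y = upd_edge x a b False then c0 a b else 0) else 0) * f y)
      = (\<Sum>y\<in>S. (if a \<noteq> b \<and> y = upd_edge x a b True then c1 a b else 0) * f y)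
      + (\<Sum>y\<in>S. (if a \<noteq> b \<and> y = upd_edge x a b False then c0 a b else 0) * f y)"
      by (simp add: sum.distrib[symmetric]) (intro sum.cong; simp add: distrib_right)
    also have "\<dots> = (if a \<noteq> b then c1 a b * f (upd_edge x a b True) + c0 a b * f (upd_edge x a b False) else 0)"
      using upd_edge_in_states[OF x that] by (subst (1 2) sum_if_eq_mult[OF finS]) (auto simp: S_def)
    finally show ?thesis .
  qed
  have edges: "(\<Sum>y\<in>S. (\<Sum>a<n. \<Sum>b<n. if a \<noteq> b then (if y = upd_edge x a b True then c1 a b else 0)
        + (if y = upd_edge x a b False then c0 a b else 0) else 0) * f y)
      = (\<Sum>a<n. \<Sum>b<n. if a \<noteq> b then c1 a b * f (upd_edge x a b True) + c0 a b * f (upd_edge x a b False) else 0)"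
    unfolding sum_distrib_right
    by (subst sum.swap, intro sum.cong refl, subst sum.swap) (simp add: edge_pair)
  show ?thesis
    unfolding S_def[symmetric] r_def[symmetric] c1_def[symmetric] c0_def[symmetric]
      infection[symmetric] recovery[symmetric] edges[symmetric] sum.distrib[symmetric]
    unfolding qrate_def r_def c1_def c0_def by (simp add: algebra_simps)
qed

lemma generator_apply:
  fixes f :: "state \<Rightarrow> real"
  assumes fin: "finite (states n)" and x: "x \<in> states n"
  shows "(\<Sum>y\<in>states n. generator n m grp B \<rho> \<gamma> lam x y * f y) =
     (\<Sum>a<n. if dis x a = 0 then (\<Sum>k<m. B (grp a) k * Eind n grp k a x) * (f (set_dis x a 1) - f x) else 0)
   + (\<Sum>a<n. if dis x a = 1 then \<gamma> (grp a) * (f (set_dis x a (-1)) - f x) else 0)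
   + (\<Sum>a<n. \<Sum>b<n. if a \<noteq> b then
        lam * \<rho> (grp a) (grp b) / real n * (f (upd_edge x a b True) - f x)
      + lam * (1 - \<rho> (grp a) (grp b) / real n) * (f (upd_edge x a b False) - f x) else 0)"
proof -
  have "(\<Sum>y\<in>states n - {x}. generator n m grp B \<rho> \<gamma> lam x y * f y)
      = (\<Sum>y\<in>states n - {x}. qrate n m grp B \<rho> \<gamma> lam x y * f y)"
    by (intro sum.cong) (auto simp: generator_def)
  then have "(\<Sum>y\<in>states n. generator n m grp B \<rho> \<gamma> lam x y * f y) =
      (\<Sum>y\<in>states n - {x}. qrate n m grp B \<rho> \<gamma> lam x y * f y) - totrate n m grp B \<rho> \<gamma> lam x * f x"
    using fin x by (simp add: sum.remove generator_def)
  moreover have "totrate n m grp B \<rho> \<gamma> lam x * f x =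
      (\<Sum>a<n. if dis x a = 0 then (\<Sum>k<m. B (grp a) k * Eind n grp k a x) * f x else 0)
    + (\<Sum>a<n. if dis x a = 1 then \<gamma> (grp a) * f x else 0)
    + (\<Sum>a<n. \<Sum>b<n. if a \<noteq> b then lam * \<rho> (grp a) (grp b) / real n * f x
        + lam * (1 - \<rho> (grp a) (grp b) / real n) * f x else 0)"
    unfolding totrate_def by (simp add: sum_distrib_right distrib_right if_distrib if_distribR cong: if_cong)
  ultimately show ?thesis
    unfolding sum_qrate[OF fin x]
    by (simp add: right_diff_distrib sum_if_diff sum_if_add sum_subtractf sum.distrib
        diff_add_eq add_diff_eq cong: if_cong)
qed

definition si_contacts :: "nat \<Rightarrow> (nat \<Rightarrow> nat) \<Rightarrow> nat \<Rightarrow> nat \<Rightarrow> state \<Rightarrow> real" where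
  "si_contacts n grp i k x = (\<Sum>a\<in>Sg n grp i x. Eind n grp k a x)"

lemma finite_Sg [simp]: "finite (Sg n grp i x)"
  by (simp add: Sg_def)

lemma finite_Ig [simp]: "finite (Ig n grp i x)"
  by (simp add: Ig_def)

lemma Sg_eq_filter: "Sg n grp i x = {a \<in> {..<n}. grp a = i \<and> dis x a = 0}"
  by (auto simp: Sg_def)

lemma Ig_eq_filter: "Ig n grp i x = {a \<in> {..<n}. grp a = i \<and> dis x a = 1}"
  by (auto simp: Ig_def)

lemma sfrac_upd_edge [simp]: "sfrac n grp i (upd_edge x a b v) = sfrac n grp i x"
  by (simp add: sfrac_def Sg_def upd_edge_def dis_def)

lemma bfrac_upd_edge [simp]: "bfrac n grp i (upd_edge x a b v) = bfrac n grp i x"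
  by (simp add: bfrac_def Ig_def upd_edge_def dis_def)

lemma real_card_Diff_singleton:
  assumes "finite A"
  shows "real (card (A - {a})) = real (card A) - of_bool (a \<in> A)"
proof (cases "a \<in> A")
  case True
  then have "1 \<le> card A"
    using assms card_0_eq by fastforce
  with True assms show ?thesis
    by (simp add: card_Diff_singleton of_nat_diff)
qed simp

lemma sfrac_infect:
  assumes "dis x a = 0"
  shows "sfrac n grp i (set_dis x a 1) = sfrac n grp i x - of_bool (a < n \<and> grp a = i) / real n"
proof -
  have "Sg n grp i (set_dis x a 1) = Sg n grp i x - {a}"
    by (auto simp: Sg_def)
  then show ?thesis
    using assms by (simp add: sfrac_def real_card_Diff_singleton Sg_def diff_divide_distrib)
qed

lemma bfrac_infect:
  assumes "dis x a = 0"
  shows "bfrac n grp i (set_dis x a 1) = bfrac n grp i x + of_bool (a < n \<and> grp a = i) / real n"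
proof -
  have "Ig n grp i (set_dis x a 1) = (if a < n \<and> grp a = i then insert a (Ig n grp i x) else Ig n grp i x)"
    by (auto simp: Ig_def)
  moreover have "a \<notin> Ig n grp i x"
    using assms by (simp add: Ig_def)
  ultimately show ?thesis
    by (simp add: bfrac_def add_divide_distrib)
qed

lemma sfrac_recover:
  assumes "dis x a = 1"
  shows "sfrac n grp i (set_dis x a (-1)) = sfrac n grp i x"
proof -
  have "Sg n grp i (set_dis x a (-1)) = Sg n grp i x"
    using assms by (auto simp: Sg_def)
  then show ?thesis
    by (simp add: sfrac_def)
qed

lemma bfrac_recover:
  assumes "dis x a = 1"
  shows "bfrac n grp i (set_dis x a (-1)) = bfrac n grp i x - of_bool (a < n \<and> grp a = i) / real n"
proof -
  have "Ig n grp i (set_dis x a (-1)) = Ig n grp i x - {a}"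
    by (auto simp: Ig_def)
  then show ?thesis
    using assms by (simp add: bfrac_def real_card_Diff_singleton Ig_def diff_divide_distrib)
qed

lemma generator_apply_fractions:
  fixes \<psi> :: "real \<Rightarrow> real \<Rightarrow> real" and grp :: "nat \<Rightarrow> nat" and i :: nat
  assumes fin: "finite (states n)" and x: "x \<in> states n"
  defines "s \<equiv> sfrac n grp i x" and "b \<equiv> bfrac n grp i x"
  shows "(\<Sum>y\<in>states n. generator n m grp B \<rho> \<gamma> lam x y * \<psi> (sfrac n grp i y) (bfrac n grp i y)) =
     (\<psi> (s - 1 / real n) (b + 1 / real n) - \<psi> s b) * (\<Sum>k<m. B i k * si_contacts n grp i k x)
   + (\<psi> s (b - 1 / real n) - \<psi> s b) * (\<gamma> i * real (card (Ig n grp i x)))"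
proof -
  define f where "f y = \<psi> (sfrac n grp i y) (bfrac n grp i y)" for y
  have infection: "(\<Sum>a<n. if dis x a = 0 then (\<Sum>k<m. B (grp a) k * Eind n grp k a x) * (f (set_dis x a 1) - f x) else 0)
      = (\<psi> (s - 1 / real n) (b + 1 / real n) - \<psi> s b) * (\<Sum>k<m. B i k * si_contacts n grp i k x)"
  proof -
    have "(\<Sum>a<n. if dis x a = 0 then (\<Sum>k<m. B (grp a) k * Eind n grp k a x) * (f (set_dis x a 1) - f x) else 0)
        = (\<Sum>a\<in>Sg n grp i x. (\<psi> (s - 1 / real n) (b + 1 / real n) - \<psi> s b) * (\<Sum>k<m. B i k * Eind n grp k a x))"
      unfolding Sg_eq_filter sum.inter_filter[OF finite_lessThan]
      by (rule sum.cong) (auto simp: f_def sfrac_infect bfrac_infect s_def b_def)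
    then show ?thesis
      by (simp add: si_contacts_def sum_distrib_left sum.swap[of _ "Sg n grp i x"] mult.left_commute)
  qed
  have recovery: "(\<Sum>a<n. if dis x a = 1 then \<gamma> (grp a) * (f (set_dis x a (-1)) - f x) else 0)
      = (\<psi> s (b - 1 / real n) - \<psi> s b) * (\<gamma> i * real (card (Ig n grp i x)))"
  proof -
    have "(\<Sum>a<n. if dis x a = 1 then \<gamma> (grp a) * (f (set_dis x a (-1)) - f x) else 0)
        = (\<Sum>a\<in>Ig n grp i x. \<gamma> i * (\<psi> s (b - 1 / real n) - \<psi> s b))"
      unfolding Ig_eq_filter sum.inter_filter[OF finite_lessThan]
      by (rule sum.cong) (auto simp: f_def sfrac_recover bfrac_recover s_def b_def)
    then show ?thesis
      by simp
  qed
  show ?thesis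
    using generator_apply[OF fin x, of m grp B \<rho> \<gamma> lam f] infection recovery
    by (simp add: f_def cong: if_cong)
qed

lemma sum_Sg_Ig:
  "(\<Sum>a\<in>Sg n grp i x. \<Sum>c\<in>Ig n grp k x. F a c)
    = (\<Sum>a<n. \<Sum>c<n. of_bool (a \<in> Sg n grp i x \<and> c \<in> Ig n grp k x) * (F a c :: real))"
proof -
  have "Sg n grp i x \<subseteq> {..<n}" "Ig n grp k x \<subseteq> {..<n}"
    by (auto simp: Sg_def Ig_def)
  then show ?thesis
    by (simp add: of_bool_conj mult.assoc sum_distrib_left[symmetric] Int_absorb1 Int_commute)
qed

locale epidemic =
  fixes n m :: nat and grp :: "nat \<Rightarrow> nat"
    and B \<rho> :: "nat \<Rightarrow> nat \<Rightarrow> real" and \<gamma> :: "nat \<Rightarrow> real" and lam :: real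
    and M :: "'w measure" and X :: "real \<Rightarrow> 'w \<Rightarrow> state"
    and chi :: "nat \<Rightarrow> nat \<Rightarrow> real \<Rightarrow> 'w \<Rightarrow> real"
    and i :: nat and t :: real
  assumes chain: "ctmc M X (states n) (generator n m grp B \<rho> \<gamma> lam)"
    and chi: "\<forall>i<m. \<forall>j<m. \<forall>t\<ge>0. \<forall>\<omega>\<in>space M. \<forall>a b.
                 a \<in> Sg n grp i (X t \<omega>) \<and> b \<in> Ig n grp j (X t \<omega>) \<longrightarrow>
                 chi i j t \<omega> = cond_edge M X n t a b \<omega>"
    and i: "i < m" and t: "0 \<le> t" and n: "0 < n"
begin

lemma prob_space_M: "prob_space M"
  and finite_states: "finite (states n)"
  and measurable_X: "X t \<in> measurable M (count_space UNIV)"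
  and X_in_states: "\<And>\<omega>. \<omega> \<in> space M \<Longrightarrow> X t \<omega> \<in> states n"
  using chain t unfolding ctmc_def by blast+

interpretation prob_space M
  by (rule prob_space_M)

definition state_mean :: "(state \<Rightarrow> real) \<Rightarrow> real" where
  "state_mean F = (LINT \<omega>|M. F (X t \<omega>))"

lemma state_mean_eq_sum: "state_mean F = (\<Sum>x\<in>states n. F x * prob {\<omega> \<in> space M. X t \<omega> = x})"
  unfolding state_mean_def using integral_finite_range[OF finite_states measurable_X X_in_states] .

lemma state_mean_cong: "(\<And>x. x \<in> states n \<Longrightarrow> F x = G x) \<Longrightarrow> state_mean F = state_mean G"
  by (simp add: state_mean_eq_sum)

lemma state_mean_add: "state_mean (\<lambda>x. F x + G x) = state_mean F + state_mean G"
  by (simp add: state_mean_eq_sum distrib_right sum.distrib)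

lemma state_mean_cmult: "state_mean (\<lambda>x. c * F x) = c * state_mean F"
  by (simp add: state_mean_eq_sum sum_distrib_left mult.assoc)

lemma state_mean_divide: "state_mean (\<lambda>x. F x / c) = state_mean F / c"
  by (simp add: state_mean_eq_sum sum_divide_distrib)

lemma state_mean_sum: "state_mean (\<lambda>x. \<Sum>k\<in>K. F k x) = (\<Sum>k\<in>K. state_mean (F k))"
  by (simp add: state_mean_eq_sum sum_distrib_right sum.swap[of _ K])

definition SI :: "state \<Rightarrow> nat set \<times> nat set" where
  "SI x = (Sall n x, Iall n x)"

lemma SI_determines_groups:
  assumes "SI x = SI y"
  shows "Sg n grp k x = Sg n grp k y" "Ig n grp k x = Ig n grp k y"
  using assms by (auto simp: SI_def Sg_def Ig_def Sall_def Iall_def set_eq_iff)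

definition expected_si_contacts :: "nat \<Rightarrow> state \<Rightarrow> real" where
  "expected_si_contacts k x = (\<Sum>a\<in>Sg n grp i x. \<Sum>c\<in>Ig n grp k x.
     \<P>(\<omega> in M. edge (X t \<omega>) a c \<bar> SI (X t \<omega>) = SI x))"

lemma cond_edge_eq_cond_prob:
  "cond_edge M X n t a c \<omega> = \<P>(\<omega>' in M. edge (X t \<omega>') a c \<bar> SI (X t \<omega>') = SI (X t \<omega>))"
  by (simp add: cond_edge_def cond_prob_def SI_def conj_commute)

text \<open>Since \<open>h\<close> only depends on the configuration \<open>(S, I)\<close>, the tower property applies to each
  pair of nodes separately, replacing the indicator of an edge by its conditional probability.\<close>
lemma state_mean_si_contacts:
  assumes h: "\<And>x y. SI x = SI y \<Longrightarrow> h x = h y"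
  shows "state_mean (\<lambda>x. h x * si_contacts n grp i k x) = state_mean (\<lambda>x. h x * expected_si_contacts k x)"
proof -
  define pair where "pair a c x = of_bool (a \<in> Sg n grp i x \<and> c \<in> Ig n grp k x) * h x" for a c x
  have pair_SI: "pair a c x = pair a c y" if "SI x = SI y" for a c x y
    using h[OF that] SI_determines_groups[OF that] by (simp add: pair_def)
  have contacts: "h x * si_contacts n grp i k x = (\<Sum>a<n. \<Sum>c<n. pair a c x * of_bool (edge x a c))" for x
    unfolding si_contacts_def Eind_def sum_Sg_Ig sum_distrib_left
    by (intro sum.cong refl) (simp add: pair_def)
  have expected: "h x * expected_si_contacts k x
      = (\<Sum>a<n. \<Sum>c<n. pair a c x * \<P>(\<omega> in M. edge (X t \<omega>) a c \<bar> SI (X t \<omega>) = SI x))" for x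
    unfolding expected_si_contacts_def sum_Sg_Ig sum_distrib_left
    by (intro sum.cong refl) (simp add: pair_def)
  have "state_mean (\<lambda>x. h x * si_contacts n grp i k x)
      = (\<Sum>a<n. \<Sum>c<n. state_mean (\<lambda>x. pair a c x * of_bool (edge x a c)))"
    by (simp only: contacts state_mean_sum)
  also have "\<dots> = (\<Sum>a<n. \<Sum>c<n. state_mean (\<lambda>x. pair a c x * \<P>(\<omega> in M. edge (X t \<omega>) a c \<bar> SI (X t \<omega>) = SI x)))"
  proof (intro sum.cong refl)
    fix a c
    show "state_mean (\<lambda>x. pair a c x * of_bool (edge x a c))
        = state_mean (\<lambda>x. pair a c x * \<P>(\<omega> in M. edge (X t \<omega>) a c \<bar> SI (X t \<omega>) = SI x))"
      unfolding state_mean_def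
      using integral_mult_cond_prob[where W=SI and G="pair a c" and E="\<lambda>x. edge x a c",
          OF finite_states measurable_X X_in_states pair_SI]
      by (rule sym)
  qed
  also have "\<dots> = state_mean (\<lambda>x. h x * expected_si_contacts k x)"
    by (simp only: expected state_mean_sum)
  finally show ?thesis .
qed

abbreviation contact_density :: "nat \<Rightarrow> 'w \<Rightarrow> real" where
  "contact_density j \<omega> \<equiv> real n * chi i j t \<omega> * sfrac n grp i (X t \<omega>) * bfrac n grp j (X t \<omega>)"

lemma contact_density_eq:
  assumes "j < m" "\<omega> \<in> space M"
  shows "contact_density j \<omega>
    = expected_si_contacts j (X t \<omega>) / real n"
proof -
  have "expected_si_contacts j (X t \<omega>) = (\<Sum>a\<in>Sg n grp i (X t \<omega>). \<Sum>c\<in>Ig n grp j (X t \<omega>). chi i j t \<omega>)"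
    unfolding expected_si_contacts_def
    using chi i t assms by (intro sum.cong refl) (simp add: cond_edge_eq_cond_prob)
  then show ?thesis
    using n by (simp add: sfrac_def bfrac_def field_simps)
qed

lemma integral_chi:
  assumes "j < m"
  shows "(LINT \<omega>|M. contact_density j \<omega>)
    = state_mean (\<lambda>x. expected_si_contacts j x / real n)"
  unfolding state_mean_def
  by (rule Bochner_Integration.integral_cong[OF refl]) (simp add: contact_density_eq assms)

lemma integral_chi_mult:
  assumes "j < m"
  shows "(LINT \<omega>|M. contact_density j \<omega> * g (X t \<omega>))
    = state_mean (\<lambda>x. expected_si_contacts j x / real n * g x)"
  unfolding state_mean_def
  by (rule Bochner_Integration.integral_cong[OF refl]) (simp add: contact_density_eq assms)

definition infection_increment :: "(real \<Rightarrow> real \<Rightarrow> real) \<Rightarrow> state \<Rightarrow> real" where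
  "infection_increment \<psi> x = \<psi> (sfrac n grp i x - 1 / real n) (bfrac n grp i x + 1 / real n)
    - \<psi> (sfrac n grp i x) (bfrac n grp i x)"

definition recovery_increment :: "(real \<Rightarrow> real \<Rightarrow> real) \<Rightarrow> state \<Rightarrow> real" where
  "recovery_increment \<psi> x = \<psi> (sfrac n grp i x) (bfrac n grp i x - 1 / real n)
    - \<psi> (sfrac n grp i x) (bfrac n grp i x)"

lemma mean_has_derivative:
  "((\<lambda>\<tau>. LINT \<omega>|M. \<psi> (sfrac n grp i (X \<tau> \<omega>)) (bfrac n grp i (X \<tau> \<omega>))) has_real_derivative
      (\<Sum>j<m. B i j * state_mean (\<lambda>x. infection_increment \<psi> x * expected_si_contacts j x))
    + \<gamma> i * (real n * state_mean (\<lambda>x. bfrac n grp i x * recovery_increment \<psi> x))) (at t within {0..})"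
proof -
  have increment_SI: "infection_increment \<psi> x = infection_increment \<psi> y" if "SI x = SI y" for x y
    using SI_determines_groups[OF that] by (simp add: infection_increment_def sfrac_def bfrac_def)
  have "real (card (Ig n grp i x)) = real n * bfrac n grp i x" for x
    using n by (simp add: bfrac_def)
  then have "state_mean (\<lambda>x. \<Sum>y\<in>states n. generator n m grp B \<rho> \<gamma> lam x y * \<psi> (sfrac n grp i y) (bfrac n grp i y))
      = state_mean (\<lambda>x. (\<Sum>j<m. B i j * (infection_increment \<psi> x * si_contacts n grp i j x))
          + \<gamma> i * (real n * (bfrac n grp i x * recovery_increment \<psi> x)))"
    by (intro state_mean_cong)
       (simp add: generator_apply_fractions[OF finite_states] infection_increment_def
         recovery_increment_def sum_distrib_right mult_ac)
  also have "\<dots> = (\<Sum>j<m. B i j * state_mean (\<lambda>x. infection_increment \<psi> x * si_contacts n grp i j x))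
      + \<gamma> i * (real n * state_mean (\<lambda>x. bfrac n grp i x * recovery_increment \<psi> x))"
    by (simp only: state_mean_add state_mean_sum state_mean_cmult)
  also have "\<dots> = (\<Sum>j<m. B i j * state_mean (\<lambda>x. infection_increment \<psi> x * expected_si_contacts j x))
      + \<gamma> i * (real n * state_mean (\<lambda>x. bfrac n grp i x * recovery_increment \<psi> x))"
    by (simp only: state_mean_si_contacts[OF increment_SI])
  finally show ?thesis
    using ctmc_expectation_has_derivative[OF chain t, of "\<lambda>x. \<psi> (sfrac n grp i x) (bfrac n grp i x)"]
    by (simp add: state_mean_def)
qed

lemma sum_state_mean_infection_increment:
  assumes increment: "\<And>x. infection_increment \<psi> x = (a * g x + c) / real n"
  shows "(\<Sum>j<m. B i j * state_mean (\<lambda>x. infection_increment \<psi> x * expected_si_contacts j x))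
    = (\<Sum>j<m. B i j * (a * (LINT \<omega>|M. contact_density j \<omega> * g (X t \<omega>))
        + c * (LINT \<omega>|M. contact_density j \<omega>)))"
proof (rule sum.cong[OF refl])
  fix j
  assume "j \<in> {..<m}"
  then have j: "j < m"
    by simp
  have "state_mean (\<lambda>x. infection_increment \<psi> x * expected_si_contacts j x)
      = state_mean (\<lambda>x. a * (expected_si_contacts j x / real n * g x) + c * (expected_si_contacts j x / real n))"
    by (rule state_mean_cong) (simp add: increment add_divide_distrib algebra_simps)
  also have "\<dots> = a * state_mean (\<lambda>x. expected_si_contacts j x / real n * g x)
      + c * state_mean (\<lambda>x. expected_si_contacts j x / real n)"
    by (simp only: state_mean_add state_mean_cmult)
  finally show "B i j * state_mean (\<lambda>x. infection_increment \<psi> x * expected_si_contacts j x)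
      = B i j * (a * (LINT \<omega>|M. contact_density j \<omega> * g (X t \<omega>))
        + c * (LINT \<omega>|M. contact_density j \<omega>))"
    by (simp only: integral_chi[OF j] integral_chi_mult[OF j])
qed

lemma state_mean_recovery_increment:
  assumes increment: "\<And>x. recovery_increment \<psi> x = (a * bfrac n grp i x + c) / real n"
  shows "real n * state_mean (\<lambda>x. bfrac n grp i x * recovery_increment \<psi> x)
    = a * (LINT \<omega>|M. (bfrac n grp i (X t \<omega>))\<^sup>2) + c * (LINT \<omega>|M. bfrac n grp i (X t \<omega>))"
proof -
  have "state_mean (\<lambda>x. bfrac n grp i x * recovery_increment \<psi> x)
      = state_mean (\<lambda>x. (a * (bfrac n grp i x)\<^sup>2 + c * bfrac n grp i x) / real n)"
    by (rule state_mean_cong) (simp add: increment power2_eq_square field_simps)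
  also have "\<dots> = (a * state_mean (\<lambda>x. (bfrac n grp i x)\<^sup>2) + c * state_mean (bfrac n grp i)) / real n"
    by (simp only: state_mean_divide state_mean_add state_mean_cmult)
  finally show ?thesis
    using n by (simp add: state_mean_def)
qed

lemma mean_susceptible_has_derivative:
  "((\<lambda>\<tau>. LINT \<omega>|M. sfrac n grp i (X \<tau> \<omega>)) has_real_derivative
     - (\<Sum>j<m. B i j * (LINT \<omega>|M. contact_density j \<omega>)))
     (at t within {0..})"
proof -
  have "infection_increment (\<lambda>s b. s) x = (0 * sfrac n grp i x + - 1) / real n"
    "recovery_increment (\<lambda>s b. s) x = (0 * bfrac n grp i x + 0) / real n" for x
    by (simp_all add: infection_increment_def recovery_increment_def)
  note infection = sum_state_mean_infection_increment[OF this(1)]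
    and recovery = state_mean_recovery_increment[OF this(2)]
  show ?thesis
    by (rule DERIV_cong[OF mean_has_derivative], unfold infection recovery) (simp add: sum_negf)
qed

lemma mean_infected_has_derivative:
  "((\<lambda>\<tau>. LINT \<omega>|M. bfrac n grp i (X \<tau> \<omega>)) has_real_derivative
     (\<Sum>j<m. B i j * (LINT \<omega>|M. contact_density j \<omega>))
     - \<gamma> i * (LINT \<omega>|M. bfrac n grp i (X t \<omega>)))
     (at t within {0..})"
proof -
  have "infection_increment (\<lambda>s b. b) x = (0 * sfrac n grp i x + 1) / real n"
    "recovery_increment (\<lambda>s b. b) x = (0 * bfrac n grp i x + - 1) / real n" for x
    by (simp_all add: infection_increment_def recovery_increment_def)
  note infection = sum_state_mean_infection_increment[OF this(1)]
    and recovery = state_mean_recovery_increment[OF this(2)]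
  show ?thesis
    by (rule DERIV_cong[OF mean_has_derivative], unfold infection recovery) simp
qed

lemma mean_susceptible_sq_has_derivative:
  "((\<lambda>\<tau>. LINT \<omega>|M. (sfrac n grp i (X \<tau> \<omega>))\<^sup>2) has_real_derivative
     - (\<Sum>j<m. 2 * B i j * (LINT \<omega>|M. real n * chi i j t \<omega> * (sfrac n grp i (X t \<omega>))\<^sup>2 * bfrac n grp j (X t \<omega>))
               - B i j * (LINT \<omega>|M. contact_density j \<omega>) / real n))
     (at t within {0..})"
proof -
  have "infection_increment (\<lambda>s b. s\<^sup>2) x = (- 2 * sfrac n grp i x + 1 / real n) / real n"
    "recovery_increment (\<lambda>s b. s\<^sup>2) x = (0 * bfrac n grp i x + 0) / real n" for x
    using n by (simp_all add: infection_increment_def recovery_increment_def power2_eq_square field_simps)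
  note infection = sum_state_mean_infection_increment[OF this(1)]
    and recovery = state_mean_recovery_increment[OF this(2)]
  have square: "(LINT \<omega>|M. real n * chi i j t \<omega> * (sfrac n grp i (X t \<omega>))\<^sup>2 * bfrac n grp j (X t \<omega>))
      = (LINT \<omega>|M. contact_density j \<omega> * sfrac n grp i (X t \<omega>))" for j
    by (simp add: power2_eq_square mult_ac)
  show ?thesis
    by (rule DERIV_cong[OF mean_has_derivative], unfold infection recovery square)
       (use n in \<open>simp add: sum_negf[symmetric] algebra_simps\<close>)
qed

lemma mean_infected_sq_has_derivative:
  "((\<lambda>\<tau>. LINT \<omega>|M. (bfrac n grp i (X \<tau> \<omega>))\<^sup>2) has_real_derivative
     (\<Sum>j<m. B i j * (2 * (LINT \<omega>|M. contact_density j \<omega> * bfrac n grp i (X t \<omega>))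
               + (LINT \<omega>|M. contact_density j \<omega>) / real n))
     - \<gamma> i * (2 * (LINT \<omega>|M. (bfrac n grp i (X t \<omega>))\<^sup>2) - (LINT \<omega>|M. bfrac n grp i (X t \<omega>)) / real n))
     (at t within {0..})"
proof -
  have "infection_increment (\<lambda>s b. b\<^sup>2) x = (2 * bfrac n grp i x + 1 / real n) / real n"
    "recovery_increment (\<lambda>s b. b\<^sup>2) x = (- 2 * bfrac n grp i x + 1 / real n) / real n" for x
    using n by (simp_all add: infection_increment_def recovery_increment_def power2_eq_square field_simps)
  note infection = sum_state_mean_infection_increment[OF this(1)]
    and recovery = state_mean_recovery_increment[OF this(2)]
  show ?thesis
    by (rule DERIV_cong[OF mean_has_derivative], unfold infection recovery) (simp add: algebra_simps)
qed

end

theorem proposition1: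
  fixes n m :: nat and grp :: "nat \<Rightarrow> nat"
    and B \<rho> :: "nat \<Rightarrow> nat \<Rightarrow> real" and \<gamma> :: "nat \<Rightarrow> real" and lam :: real
    and M :: "'w measure" and X :: "real \<Rightarrow> 'w \<Rightarrow> state"
    and chi :: "nat \<Rightarrow> nat \<Rightarrow> real \<Rightarrow> 'w \<Rightarrow> real"
    and i :: nat and t :: real
  assumes grp: "\<forall>a<n. grp a < m"
    and B: "\<forall>i<m. \<forall>j<m. 0 \<le> B i j"
    and rho: "\<forall>i<m. \<forall>j<m. 0 < \<rho> i j \<and> \<rho> i j / real n \<le> 1"
    and gam: "\<forall>i<m. 0 < \<gamma> i"
    and lam: "0 < lam"
    and chain: "ctmc M X (states n) (generator n m grp B \<rho> \<gamma> lam)"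
    and chi: "\<forall>i<m. \<forall>j<m. \<forall>t\<ge>0. \<forall>\<omega>\<in>space M. \<forall>a b.
                 a \<in> Sg n grp i (X t \<omega>) \<and> b \<in> Ig n grp j (X t \<omega>) \<longrightarrow>
                 chi i j t \<omega> = cond_edge M X n t a b \<omega>"
    and i: "i < m" and t: "0 \<le> t"
  shows
   "((\<lambda>\<tau>. LINT \<omega>|M. sfrac n grp i (X \<tau> \<omega>)) has_real_derivative
       - (\<Sum>j<m. B i j * (LINT \<omega>|M. real n * chi i j t \<omega> * sfrac n grp i (X t \<omega>) * bfrac n grp j (X t \<omega>))))
       (at t within {0..})
  \<and> ((\<lambda>\<tau>. LINT \<omega>|M. bfrac n grp i (X \<tau> \<omega>)) has_real_derivative
       (\<Sum>j<m. B i j * (LINT \<omega>|M. real n * chi i j t \<omega> * sfrac n grp i (X t \<omega>) * bfrac n grp j (X t \<omega>)))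
       - \<gamma> i * (LINT \<omega>|M. bfrac n grp i (X t \<omega>)))
       (at t within {0..})
  \<and> ((\<lambda>\<tau>. LINT \<omega>|M. (sfrac n grp i (X \<tau> \<omega>))\<^sup>2) has_real_derivative
       - (\<Sum>j<m. 2 * B i j * (LINT \<omega>|M. real n * chi i j t \<omega> * (sfrac n grp i (X t \<omega>))\<^sup>2 * bfrac n grp j (X t \<omega>))
                 - B i j * (LINT \<omega>|M. real n * chi i j t \<omega> * sfrac n grp i (X t \<omega>) * bfrac n grp j (X t \<omega>)) / real n))
       (at t within {0..})
  \<and> ((\<lambda>\<tau>. LINT \<omega>|M. (bfrac n grp i (X \<tau> \<omega>))\<^sup>2) has_real_derivative
       (\<Sum>j<m. B i j * (2 * (LINT \<omega>|M. real n * chi i j t \<omega> * sfrac n grp i (X t \<omega>) * bfrac n grp j (X t \<omega>) * bfrac n grp i (X t \<omega>))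
                 + (LINT \<omega>|M. real n * chi i j t \<omega> * sfrac n grp i (X t \<omega>) * bfrac n grp j (X t \<omega>)) / real n))
       - \<gamma> i * (2 * (LINT \<omega>|M. (bfrac n grp i (X t \<omega>))\<^sup>2) - (LINT \<omega>|M. bfrac n grp i (X t \<omega>)) / real n))
       (at t within {0..})"
proof (cases "n = 0")
  case True
  \<comment> \<open>With no nodes every fraction is a division by zero, hence 0, and all four claims are trivial.\<close>
  then have "sfrac n grp i x = 0" "bfrac n grp j x = 0" for j x
    by (simp_all add: sfrac_def bfrac_def)
  then show ?thesis
    by simp
next
  case False
  interpret epidemic n m grp B \<rho> \<gamma> lam M X chi i t
    using chain chi i t False by unfold_locales auto
  show ?thesis
    using mean_susceptible_has_derivative mean_infected_has_derivative
      mean_susceptible_sq_has_derivative mean_infected_sq_has_derivative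
    by blast
qed

end
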